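(* Fix $\varphi\colon\{0,1\}^2\to\mathbb R$ and $\varepsilon\in(0,2)$. There exist constants $C>0$ and $\delta>0$ such that for every Erdős set $\mathscr B\subseteq\mathbb N$ with $1-d<\delta$, where $d=\prod_{b\in\mathscr B}(1-1/b)$, \[ \Big|\sum_{2\le\ell\le\min\mathscr B+1}\nu_\eta(\{y:y_0=0,\ y_1=\dots=y_{\ell-2}=1,\ y_{\ell-1}=0\})\log_2\Big(1+\frac{C_{0,0}^-}{C_{0,0}^+}\Big(\frac{\lambda_-}{\lambda_+}\Big)^{\ell-1}\Big)\Big|\le C(1-d)^{\varepsilon}. \]
   Context: $\mathscr B\subseteq\mathbb N$ is Erdős if it is infinite, pairwise coprime and $\sum_{b\in\mathscr B}1/b<\infty$. For $\mathscr B\subseteq\mathbb N$, $\mathcal F_{\mathscr B}=\mathbb Z\setminus\bigcup_{b\in\mathscr B}b\mathbb Z$, $\eta=\mathbf 1_{\mathcal F_{\mathscr B}}$. The Mirsky measure is $\nu_\eta=\Phi_*(m_H)$, where $H$ is the closure of $\{(n\bmod b)_{b\in\mathscr B}:n\in\mathbb Z\}$ in $\prod_{b\in\mathscr B}\mathbb Z/b\mathbb Z$, $m_H$ its Haar measure, and $\Phi(h)_n=1$ iff $h_b+n\not\equiv0\bmod b$ for all $b$; for Erdős $\mathscr B$, $\nu_\eta(\{y:y_0=1\})=d$. Let $\mathbf M=\begin{pmatrix}2^{\varphi(0,0)}&2^{\varphi(0,1)}\\2^{\varphi(1,0)}&2^{\varphi(1,1)}\end{pmatrix}$ with eigenvalues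 $\lambda_-<\lambda_+$, $\lambda_+>|\lambda_-|$; $C_{0,0}^\pm$ are the unique reals with $(\mathbf M^{n-1})_{0,0}=C_{0,0}^+\lambda_+^{n-1}+C_{0,0}^-\lambda_-^{n-1}$ for all $n\ge1$, with $C_{0,0}^+>0$. *)

theory Defs
  imports "HOL-Probability.Probability"
begin

definition erdos_set :: "nat set \<Rightarrow> bool" where
  "erdos_set B \<longleftrightarrow> 0 \<notin> B \<and> infinite B \<and> pairwise coprime B \<and>
     summable (\<lambda>n. if n \<in> B then 1 / real n else 0)"

definition erdos_d :: "nat set \<Rightarrow> real" where
  "erdos_d B = lim (\<lambda>N. \<Prod>b\<in>B \<inter> {..<N}. (1 - 1 / real b))"

text \<open>For pairwise coprime B the closure H of the diagonal
  image of Z is (by the Chinese remainder theorem) the full product of the Z/bZ,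
  so its Haar measure is the product of the uniform measures on {0..<b}.\<close>
definition haar_H :: "nat set \<Rightarrow> (nat \<Rightarrow> nat) measure" where
  "haar_H B = PiM B (\<lambda>b. uniform_count_measure {0..<b})"

definition Phi_B :: "nat set \<Rightarrow> (nat \<Rightarrow> nat) \<Rightarrow> int \<Rightarrow> bool" where
  "Phi_B B h = (\<lambda>n. \<forall>b\<in>B. \<not> (int b dvd int (h b) + n))"

definition mirsky :: "nat set \<Rightarrow> (int \<Rightarrow> bool) measure" where
  "mirsky B = distr (haar_H B) (PiM UNIV (\<lambda>_::int. count_space (UNIV :: bool set))) (Phi_B B)"

definition Mmat :: "(bool \<Rightarrow> bool \<Rightarrow> real) \<Rightarrow> real^2^2" where
  "Mmat \<phi> = (\<chi> i j. 2 powr \<phi> (i = 1) (j = 1))"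

definition lam_plus :: "(bool \<Rightarrow> bool \<Rightarrow> real) \<Rightarrow> real" where
  "lam_plus \<phi> = (let M = Mmat \<phi>; t = M$0$0 + M$1$1; dt = M$0$0 * M$1$1 - M$0$1 * M$1$0
                  in (t + sqrt (t^2 - 4*dt)) / 2)"

definition lam_minus :: "(bool \<Rightarrow> bool \<Rightarrow> real) \<Rightarrow> real" where
  "lam_minus \<phi> = (let M = Mmat \<phi>; t = M$0$0 + M$1$1; dt = M$0$0 * M$1$1 - M$0$1 * M$1$0
                  in (t - sqrt (t^2 - 4*dt)) / 2)"

definition Mpow :: "(bool \<Rightarrow> bool \<Rightarrow> real) \<Rightarrow> nat \<Rightarrow> real^2^2" where
  "Mpow \<phi> k = ((\<lambda>A. A ** Mmat \<phi>) ^^ k) (mat 1)"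

definition C00 :: "(bool \<Rightarrow> bool \<Rightarrow> real) \<Rightarrow> real \<times> real" where
  "C00 \<phi> = (THE c. \<forall>n\<ge>1. Mpow \<phi> (n - 1) $ 0 $ 0
              = fst c * lam_plus \<phi> ^ (n - 1) + snd c * lam_minus \<phi> ^ (n - 1))"

definition cyl :: "nat \<Rightarrow> (int \<Rightarrow> bool) set" where
  "cyl l = {y. y 0 = False \<and> (\<forall>i. 1 \<le> i \<and> i \<le> int l - 2 \<longrightarrow> y i) \<and> y (int l - 1) = False}"

end

(*
  The weights log2 (1 + c (lambda_- / lambda_+)^k) are bounded by A q^k with
  q = |lambda_- / lambda_+| < 1, whatever the constant c = C00- / C00+ is.  A word
  0 1 ... 1 0 of length l forces both 0 and l - 1 to be non-free; a union bound over
  the pairs (b, c) of the events "b divides h_b" and "c divides h_c + l - 1", of Haar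
  measure 1/(bc) for b ~= c since the residues are independent and uniform, bounds its
  Mirsky measure by S^2 + [l - 1 in B]/(l - 1) with S = sum 1/b, and as l - 1 <= min B
  the second term only occurs for l - 1 = min B.  From d (1 + S) <= 1 and
  d <= 1 - 1/min B, both S and 1/min B are O(1 - d) once d >= 1/2, so the sum is
  O((1 - d)^2), which is O((1 - d)^eps) for every eps <= 2.
*)
theory Submission
  imports Defs "HOL-Number_Theory.Cong"
begin

lemma card_residues_dvd_add:
  assumes "0 < (b::nat)"
  shows "card {x. x < b \<and> b dvd x + s} = 1"
proof -
  define y where "y = (b - s mod b) mod b"
  have "(y + s) mod b = (b - s mod b + s mod b) mod b"
    unfolding y_def by (simp add: mod_add_left_eq mod_add_right_eq)
  also have "\<dots> = 0" using assms by simp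
  finally have y: "y < b \<and> b dvd y + s" using assms by (auto simp: y_def)
  have "x = y" if "x < b" "b dvd x + s" for x
    using that y
    by (metis cong_0_iff cong_add_rcancel_nat cong_less_modulus_unique_nat cong_sym cong_trans)
  then have "{x. x < b \<and> b dvd x + s} = {y}" using y by blast
  then show ?thesis by simp
qed

lemma (in finite_measure) measure_le_suminf_cover:
  assumes "X \<subseteq> (\<Union>i. A i)" "range A \<subseteq> sets M" "\<And>i. measure M (A i) \<le> a i" "summable a"
  shows "measure M X \<le> suminf a"
proof -
  have summable: "summable (\<lambda>i. measure M (A i))"
    by (rule summable_comparison_test'[OF assms(4), of 0]) (simp add: assms(3))
  have "measure M X \<le> measure M (\<Union>i. A i)"
    using assms(1,2) by (intro finite_measure_mono) auto
  also have "\<dots> \<le> (\<Sum>i. measure M (A i))"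
    using assms(2) summable by (rule finite_measure_subadditive_countably)
  also have "\<dots> \<le> suminf a"
    using assms(3) summable assms(4) by (rule suminf_le)
  finally show ?thesis .
qed

lemma prod_one_minus_mult_one_plus_sum_le:
  fixes x :: "'a \<Rightarrow> real"
  assumes "finite F" "\<And>i. i \<in> F \<Longrightarrow> 0 \<le> x i" "\<And>i. i \<in> F \<Longrightarrow> x i \<le> 1"
  shows "(\<Prod>i\<in>F. 1 - x i) * (1 + (\<Sum>i\<in>F. x i)) \<le> 1"
  using assms
proof (induction F rule: finite_induct)
  case (insert a F)
  define P where "P = (\<Prod>i\<in>F. 1 - x i)"
  define T where "T = (\<Sum>i\<in>F. x i)"
  have "P * (1 + T) \<le> 1" using insert by (simp add: P_def T_def)
  moreover have "0 \<le> P * x a * (T + x a)"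
  proof -
    have "0 \<le> P" "0 \<le> T" "0 \<le> x a"
      using insert.prems by (auto simp: P_def T_def intro!: prod_nonneg sum_nonneg)
    then show ?thesis by simp
  qed
  moreover have "(1 - x a) * P * (1 + (x a + T)) = P * (1 + T) - P * x a * (T + x a)"
    by (simp add: algebra_simps)
  ultimately show ?case using insert by (simp add: P_def T_def)
qed simp

lemma inverse_of_nat_le_1: "1 / real (n::nat) \<le> 1"
  by (cases n) auto

lemma abs_ln_one_plus_le:
  fixes x :: real
  assumes "\<bar>x\<bar> \<le> 1 / 2"
  shows "\<bar>ln (1 + x)\<bar> \<le> 2 * \<bar>x\<bar>"
proof -
  have "2 * x\<^sup>2 = (2 * \<bar>x\<bar>) * \<bar>x\<bar>"
    by (simp add: power2_eq_square)
  also have "\<dots> \<le> 1 * \<bar>x\<bar>"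
    using assms by (intro mult_right_mono) simp_all
  finally have "2 * x\<^sup>2 \<le> \<bar>x\<bar>" by simp
  then show ?thesis using abs_ln_one_plus_x_minus_x_bound[OF assms] by linarith
qed

lemma geometric_bound_of_eventually:
  fixes g :: "nat \<Rightarrow> real"
  assumes "0 < q" "eventually (\<lambda>k. \<bar>g k\<bar> \<le> A * q ^ k) sequentially"
  shows "\<exists>A'\<ge>0. \<forall>k. \<bar>g k\<bar> \<le> A' * q ^ k"
proof -
  obtain K where K: "\<And>k. K \<le> k \<Longrightarrow> \<bar>g k\<bar> \<le> A * q ^ k"
    using assms(2) by (auto simp: eventually_sequentially)
  define A' where "A' = \<bar>A\<bar> + (\<Sum>j<K. \<bar>g j\<bar> / q ^ j)"
  have sum_nonneg: "0 \<le> (\<Sum>j<K. \<bar>g j\<bar> / q ^ j)"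
    using assms(1) by (intro sum_nonneg) simp
  have "\<bar>g k\<bar> \<le> A' * q ^ k" for k
  proof (cases "K \<le> k")
    case True
    then have "\<bar>g k\<bar> \<le> \<bar>A\<bar> * q ^ k"
      using K[OF True] assms(1) by (smt (verit) mult_right_mono zero_le_power)
    also have "\<dots> \<le> A' * q ^ k"
      unfolding A'_def using sum_nonneg assms(1) by (intro mult_right_mono) simp_all
    finally show ?thesis .
  next
    case False
    have "\<bar>g k\<bar> = \<bar>g k\<bar> / q ^ k * q ^ k" using assms(1) by simp
    also have "\<dots> \<le> A' * q ^ k"
      unfolding A'_def using False assms(1)
      by (intro mult_right_mono add_increasing abs_ge_zero member_le_sum[where f = "\<lambda>j. \<bar>g j\<bar> / q ^ j"])
        auto
    finally show ?thesis .
  qed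
  moreover have "0 \<le> A'" unfolding A'_def using sum_nonneg by simp
  ultimately show ?thesis by blast
qed

lemma of_nat_mult_power_le:
  fixes q :: real
  assumes "0 \<le> q" "q < 1"
  shows "real k * q ^ k \<le> 1 / (1 - q)"
proof -
  have "real k * q ^ k = (\<Sum>i<k. q ^ k)" by simp
  also have "\<dots> \<le> (\<Sum>i<k. q ^ i)" using assms by (intro sum_mono power_decreasing) auto
  also have "\<dots> = (1 - q ^ k) / (1 - q)" using assms by (simp add: sum_gp_strict)
  also have "\<dots> \<le> 1 / (1 - q)" using assms by (intro divide_right_mono) auto
  finally show ?thesis .
qed

lemma square_le_powr:
  fixes x e :: real
  assumes "0 < x" "x \<le> 1" "e \<le> 2"
  shows "x\<^sup>2 \<le> x powr e"
proof -
  have "x powr 2 \<le> x powr e" using assms by (intro powr_mono') auto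
  then show ?thesis using assms(1) by (simp add: powr_numeral)
qed

section \<open>The Haar measure as a product of uniform residues\<close>

text \<open>Taking \<open>{0..<max b 1}\<close> rather than \<open>{0..<b}\<close> makes every factor a probability
  space, as \<open>product_prob_space\<close> requires; on an Erdos set (\<open>0 \<notin> B\<close>) nothing changes.\<close>

definition residue_measure :: "nat \<Rightarrow> nat measure" where
  "residue_measure b = uniform_count_measure {0..<max b 1}"

lemma prob_space_residue_measure: "prob_space (residue_measure b)"
  unfolding residue_measure_def by (rule prob_space_uniform_count_measure) auto

lemma product_prob_space_residue_measure: "product_prob_space residue_measure"
  unfolding product_prob_space_def product_prob_space_axioms_def product_sigma_finite_def
  using prob_space_residue_measure prob_space_imp_sigma_finite by blast

lemma haar_H_eq_PiM_residue_measure: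
  assumes "0 \<notin> B"
  shows "haar_H B = PiM B residue_measure"
  unfolding haar_H_def residue_measure_def
proof (rule PiM_cong)
  fix b assume "b \<in> B"
  with assms have "max b 1 = b" by (cases b) auto
  then show "uniform_count_measure {0..<b} = uniform_count_measure {0..<max b 1}" by simp
qed simp

lemma prob_space_haar_H:
  assumes "0 \<notin> B"
  shows "prob_space (haar_H B)"
  unfolding haar_H_eq_PiM_residue_measure[OF assms] by (rule prob_space_PiM prob_space_residue_measure)+

lemma sets_haar_H_Collect_Ball:
  assumes "0 \<notin> B" "J \<subseteq> B"
  shows "{h \<in> space (haar_H B). \<forall>b\<in>J. P b (h b)} \<in> sets (haar_H B)"
proof -
  let ?M = "PiM B residue_measure"
  have "{h \<in> space ?M. b \<in> J \<longrightarrow> P b (h b)} \<in> sets ?M" for b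
    using assms(2) by (cases "b \<in> J") (auto intro!: sets_Collect_single'
        simp: residue_measure_def sets_uniform_count_measure space_uniform_count_measure)
  then have "{h \<in> space ?M. \<forall>b. b \<in> J \<longrightarrow> P b (h b)} \<in> sets ?M"
    by (rule sets.sets_Collect_countable_All)
  then show ?thesis by (simp add: haar_H_eq_PiM_residue_measure[OF assms(1)] Ball_def)
qed

lemma Phi_B_measurable:
  assumes "0 \<notin> B"
  shows "Phi_B B \<in> haar_H B \<rightarrow>\<^sub>M PiM UNIV (\<lambda>_::int. count_space UNIV)"
proof -
  have "Measurable.pred (haar_H B) (\<lambda>h. Phi_B B h n)" for n
    using sets_haar_H_Collect_Ball[OF assms order_refl, of "\<lambda>b x. \<not> int b dvd int x + n"]
    unfolding Phi_B_def Measurable.pred_def .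
  then show ?thesis
    by (intro measurable_PiM_single') auto
qed

lemma Phi_B_of_nat: "Phi_B B h (int k) \<longleftrightarrow> (\<forall>b\<in>B. \<not> b dvd h b + k)"
  by (simp add: Phi_B_def flip: of_nat_add)

lemma measure_haar_H_dvd_add:
  assumes "0 \<notin> B" "finite J" "J \<subseteq> B"
  shows "measure (haar_H B) {h \<in> space (haar_H B). \<forall>b\<in>J. b dvd h b + s b} = (\<Prod>b\<in>J. 1 / real b)"
proof -
  interpret product_prob_space residue_measure B
    by (rule product_prob_space_residue_measure)
  define X where "X b = {x. x < b \<and> b dvd x + s b}" for b
  have max_eq: "max b 1 = b" if "b \<in> J" for b
    using that assms(1,3) by (cases b) auto
  have "emeasure (haar_H B) {h \<in> space (haar_H B). \<forall>b\<in>J. b dvd h b + s b}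
      = emeasure (PiM B residue_measure) {h \<in> space (PiM B residue_measure). \<forall>b\<in>J. h b \<in> X b}"
    using assms(3) max_eq
    by (auto simp: haar_H_eq_PiM_residue_measure[OF assms(1)] X_def space_PiM residue_measure_def
        space_uniform_count_measure PiE_def Pi_def intro!: arg_cong[where f = "emeasure _"])
  also have "\<dots> = (\<Prod>b\<in>J. emeasure (residue_measure b) (X b))"
    by (rule emeasure_PiM_Collect)
      (use assms in \<open>auto simp: residue_measure_def sets_uniform_count_measure X_def\<close>)
  also have "\<dots> = (\<Prod>b\<in>J. ennreal (1 / real b))"
  proof (rule prod.cong)
    fix b assume "b \<in> J"
    then have "0 < b" using assms(1,3) by (cases b) auto
    then have "emeasure (residue_measure b) (X b) = card (X b) / card {0..<b}"
      using max_eq[OF \<open>b \<in> J\<close>]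
      by (simp add: residue_measure_def emeasure_uniform_count_measure X_def subset_eq)
    also have "\<dots> = ennreal (1 / real b)"
      using card_residues_dvd_add[OF \<open>0 < b\<close>]
      by (simp add: X_def ennreal_of_nat_eq_real_of_nat divide_ennreal)
    finally show "emeasure (residue_measure b) (X b) = ennreal (1 / real b)" .
  qed simp
  also have "\<dots> = ennreal (\<Prod>b\<in>J. 1 / real b)"
    by (simp add: prod_ennreal)
  finally show ?thesis
    by (simp add: haar_H_eq_PiM_residue_measure[OF assms(1)] emeasure_eq_measure prod_nonneg)
qed

section \<open>Erdos sets and their density\<close>

definition recip_on :: "nat set \<Rightarrow> nat \<Rightarrow> real" where
  "recip_on B n = (if n \<in> B then 1 / real n else 0)"

definition recip_sum :: "nat set \<Rightarrow> real" where
  "recip_sum B = (\<Sum>n. recip_on B n)"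

lemma recip_on_nonneg: "0 \<le> recip_on B n"
  by (simp add: recip_on_def)

lemma summable_recip_on: "erdos_set B \<Longrightarrow> summable (recip_on B)"
  by (simp add: erdos_set_def recip_on_def[abs_def])

lemma recip_sum_nonneg: "summable (recip_on B) \<Longrightarrow> 0 \<le> recip_sum B"
  unfolding recip_sum_def by (intro suminf_nonneg) (simp_all add: recip_on_nonneg)

lemma erdos_set_Inf:
  assumes "erdos_set B"
  shows "Inf B \<in> B" "0 < Inf B"
proof -
  have "B \<noteq> {}" using assms by (auto simp: erdos_set_def)
  then show "Inf B \<in> B" by (rule Inf_nat_def1)
  then show "0 < Inf B" using assms unfolding erdos_set_def by (auto intro: gr0I)
qed

definition erdos_partial_prod :: "nat set \<Rightarrow> nat \<Rightarrow> real" where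
  "erdos_partial_prod B N = (\<Prod>b\<in>B \<inter> {..<N}. 1 - 1 / real b)"

lemma erdos_partial_prod_nonneg: "0 \<le> erdos_partial_prod B N"
  unfolding erdos_partial_prod_def by (intro prod_nonneg) (simp add: inverse_of_nat_le_1)

lemma decseq_erdos_partial_prod: "decseq (erdos_partial_prod B)"
  unfolding decseq_Suc_iff
proof
  fix N
  show "erdos_partial_prod B (Suc N) \<le> erdos_partial_prod B N"
  proof (cases "N \<in> B")
    case True
    then have "erdos_partial_prod B (Suc N) = (1 - 1 / real N) * erdos_partial_prod B N"
      unfolding erdos_partial_prod_def by (simp add: lessThan_Suc Int_insert_right)
    then show ?thesis
      using erdos_partial_prod_nonneg[of B N] inverse_of_nat_le_1[of N]
      by (simp add: mult_left_le_one_le)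
  next
    case False
    then show ?thesis unfolding erdos_partial_prod_def by (simp add: lessThan_Suc Int_insert_right)
  qed
qed

lemma erdos_partial_prod_tendsto: "erdos_partial_prod B \<longlonglongrightarrow> erdos_d B"
proof -
  obtain L where L: "erdos_partial_prod B \<longlonglongrightarrow> L"
    by (rule decseq_convergent[OF decseq_erdos_partial_prod, where B = 0])
      (simp add: erdos_partial_prod_nonneg)
  have "erdos_d B = lim (erdos_partial_prod B)"
    unfolding erdos_d_def erdos_partial_prod_def ..
  with L show ?thesis by (simp add: limI)
qed

lemma erdos_d_le_partial_prod: "erdos_d B \<le> erdos_partial_prod B N"
  by (rule decseq_ge[OF decseq_erdos_partial_prod erdos_partial_prod_tendsto])

lemma erdos_d_nonneg: "0 \<le> erdos_d B"
  by (rule LIMSEQ_le_const[OF erdos_partial_prod_tendsto]) (simp add: erdos_partial_prod_nonneg)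

lemma erdos_d_mult_one_plus_recip_sum_le:
  assumes "summable (recip_on B)"
  shows "erdos_d B * (1 + recip_sum B) \<le> 1"
proof (rule LIMSEQ_le_const2)
  show "(\<lambda>N. erdos_d B * (1 + sum (recip_on B) {..<N})) \<longlonglongrightarrow> erdos_d B * (1 + recip_sum B)"
    unfolding recip_sum_def using assms by (intro tendsto_intros summable_LIMSEQ)
  show "\<exists>N0. \<forall>N\<ge>N0. erdos_d B * (1 + sum (recip_on B) {..<N}) \<le> 1"
  proof (intro exI allI impI)
    fix N
    have recip_sum_eq: "sum (recip_on B) {..<N} = (\<Sum>b\<in>B \<inter> {..<N}. 1 / real b)"
      by (simp add: recip_on_def sum.If_cases Int_commute)
    have "0 \<le> sum (recip_on B) {..<N}" by (simp add: sum_nonneg recip_on_nonneg)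
    then have "erdos_d B * (1 + sum (recip_on B) {..<N}) \<le> erdos_partial_prod B N * (1 + sum (recip_on B) {..<N})"
      by (intro mult_right_mono erdos_d_le_partial_prod) simp
    also have "\<dots> \<le> 1"
      unfolding erdos_partial_prod_def recip_sum_eq
      by (intro prod_one_minus_mult_one_plus_sum_le) (auto simp: inverse_of_nat_le_1)
    finally show "erdos_d B * (1 + sum (recip_on B) {..<N}) \<le> 1" .
  qed
qed

lemma inverse_Inf_le_one_minus_erdos_d:
  assumes "B \<noteq> {}"
  shows "1 / real (Inf B) \<le> 1 - erdos_d B"
proof -
  have "B \<inter> {..<Inf B + 1} = {Inf B}"
  proof
    show "B \<inter> {..<Inf B + 1} \<subseteq> {Inf B}"
      using cInf_lower[of _ B] by fastforce
    show "{Inf B} \<subseteq> B \<inter> {..<Inf B + 1}"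
      using Inf_nat_def1[OF assms] by simp
  qed
  then have "erdos_partial_prod B (Inf B + 1) = 1 - 1 / real (Inf B)"
    by (simp add: erdos_partial_prod_def)
  then show ?thesis using erdos_d_le_partial_prod[of B "Inf B + 1"] by simp
qed

lemma recip_sum_le_twice_one_minus_erdos_d:
  assumes "summable (recip_on B)" "1 / 2 \<le> erdos_d B"
  shows "recip_sum B \<le> 2 * (1 - erdos_d B)"
proof -
  have "1 / 2 * recip_sum B \<le> erdos_d B * recip_sum B"
    using assms(2) recip_sum_nonneg[OF assms(1)] by (rule mult_right_mono)
  then show ?thesis
    using erdos_d_mult_one_plus_recip_sum_le[OF assms(1)] by (simp add: algebra_simps)
qed

lemma erdos_d_less_1:
  assumes "erdos_set B"
  shows "erdos_d B < 1"
proof -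
  have "0 < 1 / real (Inf B)" using erdos_set_Inf(2)[OF assms] by simp
  moreover have "1 / real (Inf B) \<le> 1 - erdos_d B"
    using erdos_set_Inf(1)[OF assms] by (intro inverse_Inf_le_one_minus_erdos_d) auto
  ultimately show ?thesis by linarith
qed

lemma recip_sum_sq_plus_inverse_Inf_sq_le:
  assumes "erdos_set B" "1 / 2 \<le> erdos_d B"
  shows "recip_sum B ^ 2 + (1 / real (Inf B))\<^sup>2 \<le> 5 * (1 - erdos_d B)\<^sup>2"
proof -
  have summable: "summable (recip_on B)" using assms(1) by (rule summable_recip_on)
  have "recip_sum B ^ 2 + (1 / real (Inf B))\<^sup>2 \<le> (2 * (1 - erdos_d B))\<^sup>2 + (1 - erdos_d B)\<^sup>2"
  proof (intro add_mono power_mono)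
    show "recip_sum B \<le> 2 * (1 - erdos_d B)"
      using summable assms(2) by (rule recip_sum_le_twice_one_minus_erdos_d)
    show "1 / real (Inf B) \<le> 1 - erdos_d B"
      using erdos_set_Inf(1)[OF assms(1)] by (intro inverse_Inf_le_one_minus_erdos_d) auto
  qed (simp_all add: recip_sum_nonneg[OF summable])
  then show ?thesis by (simp only: power_mult_distrib) simp
qed

section \<open>Cylinder sets of the Mirsky measure\<close>

lemma measure_haar_H_pair_le:
  assumes "0 \<notin> B" "1 \<le> k" "\<forall>b\<in>B. k \<le> b"
  shows "measure (haar_H B) {h \<in> space (haar_H B). b \<in> B \<and> c \<in> B \<and> b dvd h b \<and> c dvd h c + k}
    \<le> recip_on B b * recip_on B c + (if b = k \<and> c = k then recip_on B k else 0)"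
    (is "measure _ ?E \<le> ?bound")
proof -
  interpret prob_space "haar_H B" by (rule prob_space_haar_H[OF assms(1)])
  have bound_nonneg: "0 \<le> ?bound" by (simp add: recip_on_nonneg)
  consider "b \<notin> B \<or> c \<notin> B" | "b \<in> B" "c = b" | "b \<in> B" "c \<in> B" "b \<noteq> c" by blast
  then show ?thesis
  proof cases
    case 1
    then have "?E = {}" by auto
    then show ?thesis using bound_nonneg by (simp only: measure_empty)
  next
    case 2
    have "b = k" if "h \<in> ?E" for h
    proof -
      from that 2 have "b dvd k" by (auto simp: dvd_add_right_iff)
      moreover have "k \<le> b" using assms(3) 2 by blast
      ultimately show "b = k" using assms(2) by (simp add: dvd_imp_le le_antisym)
    qed
    show ?thesis
    proof (cases "b = k")
      case True
      have "measure (haar_H B) ?E \<le> measure (haar_H B) {h \<in> space (haar_H B). \<forall>x\<in>{b}. x dvd h x + 0}"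
        using 2 by (intro finite_measure_mono sets_haar_H_Collect_Ball assms(1)) auto
      also have "\<dots> = 1 / real b"
        using measure_haar_H_dvd_add[OF assms(1), of "{b}" "\<lambda>_. 0"] 2 by simp
      finally show ?thesis
        using True 2 by (simp add: recip_on_def add_increasing)
    next
      case False
      then have "?E = {}" using \<open>\<And>h. h \<in> ?E \<Longrightarrow> b = k\<close> by blast
      then show ?thesis using bound_nonneg by (simp only: measure_empty)
    qed
  next
    case 3
    have "?E = {h \<in> space (haar_H B). \<forall>x\<in>{b, c}. x dvd h x + (if x = b then 0 else k)}"
      using 3 by auto
    then have "measure (haar_H B) ?E = 1 / real b * (1 / real c)"
      using measure_haar_H_dvd_add[OF assms(1), of "{b, c}" "\<lambda>x. if x = b then 0 else k"] 3
      by simp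
    then show ?thesis using 3 by (simp add: recip_on_def)
  qed
qed

lemma measure_haar_H_not_Phi_B_0_and_le:
  assumes "0 \<notin> B" "summable (recip_on B)" "1 \<le> k" "\<forall>b\<in>B. k \<le> b"
  shows "measure (haar_H B) {h \<in> space (haar_H B). \<not> Phi_B B h 0 \<and> \<not> Phi_B B h (int k)}
    \<le> recip_sum B ^ 2 + recip_on B k"
proof -
  interpret prob_space "haar_H B" by (rule prob_space_haar_H[OF assms(1)])
  define E where "E b c = {h \<in> space (haar_H B). b \<in> B \<and> c \<in> B \<and> b dvd h b \<and> c dvd h c + k}" for b c
  have E_sets: "E b c \<in> events" for b c
  proof -
    have "E b c = (if b \<in> B \<and> c \<in> B then {h \<in> space (haar_H B). \<forall>x\<in>{b}. x dvd h x}
        \<inter> {h \<in> space (haar_H B). \<forall>x\<in>{c}. x dvd h x + k} else {})"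
      by (auto simp: E_def)
    then show ?thesis
      using sets_haar_H_Collect_Ball[OF assms(1), of "{b}" "\<lambda>x y. x dvd y"]
        sets_haar_H_Collect_Ball[OF assms(1), of "{c}" "\<lambda>x y. x dvd y + k"] by auto
  qed
  have row: "measure (haar_H B) (\<Union>c. E b c) \<le> recip_on B b * recip_sum B + (if b = k then recip_on B k else 0)"
    for b
  proof -
    define a where "a c = recip_on B b * recip_on B c + (if c = k then (if b = k then recip_on B k else 0) else 0)" for c
    have "a sums (recip_on B b * recip_sum B + (if b = k then recip_on B k else 0))"
      unfolding a_def recip_sum_def using assms(2) by (intro sums_add sums_mult summable_sums sums_single)
    moreover have "measure (haar_H B) (\<Union>c. E b c) \<le> suminf a"
    proof (rule measure_le_suminf_cover)
      show "measure (haar_H B) (E b c) \<le> a c" for c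
        unfolding E_def a_def by (rule order_trans[OF measure_haar_H_pair_le[OF assms(1,3,4)]]) simp
    qed (use E_sets \<open>a sums _\<close> in \<open>auto simp: sums_iff\<close>)
    ultimately show ?thesis by (simp add: sums_iff)
  qed
  define a where "a b = recip_on B b * recip_sum B + (if b = k then recip_on B k else 0)" for b
  have "a sums (recip_sum B ^ 2 + recip_on B k)"
    unfolding a_def recip_sum_def power2_eq_square using assms(2)
    by (intro sums_add sums_mult2 summable_sums sums_single)
  moreover have "measure (haar_H B) {h \<in> space (haar_H B). \<not> Phi_B B h 0 \<and> \<not> Phi_B B h (int k)} \<le> suminf a"
  proof (rule measure_le_suminf_cover)
    show "{h \<in> space (haar_H B). \<not> Phi_B B h 0 \<and> \<not> Phi_B B h (int k)} \<subseteq> (\<Union>b. \<Union>c. E b c)"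
      using Phi_B_of_nat[of B _ 0] Phi_B_of_nat[of B _ k] by (auto simp: E_def)
  qed (use row E_sets \<open>a sums _\<close> in \<open>auto simp: sums_iff a_def\<close>)
  ultimately show ?thesis by (simp add: sums_iff)
qed

lemma measure_mirsky_cyl_le:
  assumes "erdos_set B" "2 \<le> l" "l \<le> Inf B + 1"
  shows "measure (mirsky B) (cyl l) \<le> recip_sum B ^ 2 + recip_on B (l - 1)"
proof -
  let ?N = "PiM UNIV (\<lambda>_::int. count_space (UNIV :: bool set))"
  define k where "k = l - 1"
  have B0: "0 \<notin> B" using assms(1) by (simp add: erdos_set_def)
  have k_le: "\<forall>b\<in>B. k \<le> b"
  proof
    fix b assume "b \<in> B"
    then have "Inf B \<le> b" by (rule cInf_lower) simp
    then show "k \<le> b" using assms(3) by (simp add: k_def)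
  qed
  have Phi: "Phi_B B \<in> haar_H B \<rightarrow>\<^sub>M ?N" by (rule Phi_B_measurable[OF B0])
  interpret prob_space "mirsky B"
    unfolding mirsky_def by (rule prob_space.prob_space_distr[OF prob_space_haar_H[OF B0] Phi])
  define Z where "Z = {y :: int \<Rightarrow> bool. \<not> y 0 \<and> \<not> y (int k)}"
  have "Measurable.pred ?N (\<lambda>y. \<not> y 0 \<and> \<not> y (int k))" by measurable
  then have Z_sets: "Z \<in> sets ?N" by (simp add: Measurable.pred_def Z_def space_PiM)
  have "measure (mirsky B) (cyl l) \<le> measure (mirsky B) Z"
    using assms(2) Z_sets by (intro finite_measure_mono) (auto simp: cyl_def Z_def k_def mirsky_def of_nat_diff)
  also have "\<dots> = measure (haar_H B) (Phi_B B -` Z \<inter> space (haar_H B))"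
    unfolding mirsky_def using Phi Z_sets by (rule measure_distr)
  also have "Phi_B B -` Z \<inter> space (haar_H B) = {h \<in> space (haar_H B). \<not> Phi_B B h 0 \<and> \<not> Phi_B B h (int k)}"
    by (auto simp: Z_def)
  also have "measure (haar_H B) \<dots> \<le> recip_sum B ^ 2 + recip_on B k"
    using assms(2) k_le by (intro measure_haar_H_not_Phi_B_0_and_le B0 summable_recip_on assms(1)) (auto simp: k_def)
  finally show ?thesis by (simp add: k_def)
qed

lemma abs_lam_minus_less_lam_plus: "\<bar>lam_minus \<phi>\<bar> < lam_plus \<phi>"
proof -
  define a where "a = Mmat \<phi> $ 0 $ 0"
  define b where "b = Mmat \<phi> $ 0 $ 1"
  define c where "c = Mmat \<phi> $ 1 $ 0"
  define e where "e = Mmat \<phi> $ 1 $ 1"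
  have pos: "0 < a" "0 < b" "0 < c" "0 < e"
    unfolding a_def b_def c_def e_def by (simp_all add: Mmat_def)
  define t where "t = a + e"
  define s where "s = sqrt (t\<^sup>2 - 4 * (a * e - b * c))"
  have discriminant: "t\<^sup>2 - 4 * (a * e - b * c) = (a - e)\<^sup>2 + 4 * (b * c)"
    unfolding t_def by (simp add: power2_eq_square algebra_simps)
  have "0 < (a - e)\<^sup>2 + 4 * (b * c)"
    using pos by (intro add_nonneg_pos) simp_all
  then have "0 < s" unfolding s_def discriminant by simp
  moreover have "0 < t" using pos by (simp add: t_def)
  moreover have "lam_plus \<phi> = (t + s) / 2" "lam_minus \<phi> = (t - s) / 2"
    unfolding lam_plus_def lam_minus_def Let_def s_def t_def a_def b_def c_def e_def by simp_all
  ultimately show ?thesis by (simp add: abs_less_iff)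
qed

lemma abs_log_one_plus_geometric_le:
  fixes c r :: real
  assumes "\<bar>r\<bar> < 1"
  shows "\<exists>A\<ge>0. \<forall>k\<ge>1. \<bar>log 2 (1 + c * r ^ k)\<bar> \<le> A * \<bar>r\<bar> ^ k"
proof (cases "r = 0")
  case True
  then show ?thesis by (intro exI[of _ 0]) (simp add: power_0_left)
next
  case False
  have "(\<lambda>k. c * r ^ k) \<longlonglongrightarrow> 0"
    using assms by (intro tendsto_mult_right_zero LIMSEQ_power_zero) simp
  then have "eventually (\<lambda>k. \<bar>c * r ^ k\<bar> < 1 / 2) sequentially"
    by (rule order_tendstoD(2)[OF tendsto_rabs_zero]) simp
  then have "eventually (\<lambda>k. \<bar>log 2 (1 + c * r ^ k)\<bar> \<le> (2 * \<bar>c\<bar> / ln 2) * \<bar>r\<bar> ^ k) sequentially"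
  proof (rule eventually_mono)
    fix k assume "\<bar>c * r ^ k\<bar> < 1 / 2"
    then have "\<bar>ln (1 + c * r ^ k)\<bar> / ln 2 \<le> 2 * \<bar>c * r ^ k\<bar> / ln 2"
      by (intro divide_right_mono abs_ln_one_plus_le) simp_all
    then show "\<bar>log 2 (1 + c * r ^ k)\<bar> \<le> (2 * \<bar>c\<bar> / ln 2) * \<bar>r\<bar> ^ k"
      by (simp add: log_def abs_mult power_abs)
  qed
  then have "\<exists>A\<ge>0. \<forall>k. \<bar>log 2 (1 + c * r ^ k)\<bar> \<le> A * \<bar>r\<bar> ^ k"
    by (rule geometric_bound_of_eventually[rotated]) (use False in simp)
  then show ?thesis by blast
qed

lemma abs_sum_mirsky_cyl_weighted_le_sum:
  fixes g w :: "nat \<Rightarrow> real"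
  assumes "erdos_set B" "\<And>k. 1 \<le> k \<Longrightarrow> \<bar>g k\<bar> \<le> w k"
  shows "\<bar>\<Sum>l\<in>{2..Inf B + 1}. measure (mirsky B) (cyl l) * g (l - 1)\<bar>
    \<le> (\<Sum>k\<in>{1..Inf B}. (recip_sum B ^ 2 + recip_on B k) * w k)"
proof -
  have "\<bar>\<Sum>l\<in>{2..Inf B + 1}. measure (mirsky B) (cyl l) * g (l - 1)\<bar>
      \<le> (\<Sum>l\<in>{2..Inf B + 1}. (recip_sum B ^ 2 + recip_on B (l - 1)) * w (l - 1))"
  proof (rule order_trans[OF sum_abs sum_mono])
    fix l assume l: "l \<in> {2..Inf B + 1}"
    have "\<bar>measure (mirsky B) (cyl l) * g (l - 1)\<bar> = measure (mirsky B) (cyl l) * \<bar>g (l - 1)\<bar>"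
      by (simp add: abs_mult)
    also have "\<dots> \<le> (recip_sum B ^ 2 + recip_on B (l - 1)) * w (l - 1)"
      using l measure_mirsky_cyl_le[OF assms(1), of l] assms(2)[of "l - 1"]
      by (intro mult_mono) (auto simp: recip_on_nonneg)
    finally show "\<bar>measure (mirsky B) (cyl l) * g (l - 1)\<bar>
        \<le> (recip_sum B ^ 2 + recip_on B (l - 1)) * w (l - 1)" .
  qed
  also have "\<dots> = (\<Sum>k\<in>{1..Inf B}. (recip_sum B ^ 2 + recip_on B k) * w k)"
    by (rule sum.reindex_bij_witness[of _ Suc "\<lambda>l. l - 1"]) auto
  finally show ?thesis .
qed

lemma sum_recip_on_mult_power:
  assumes "erdos_set B"
  shows "(\<Sum>k\<in>{1..Inf B}. recip_on B k * q ^ k) = q ^ Inf B / Inf B"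
proof -
  have "(\<Sum>k\<in>{1..Inf B}. recip_on B k * q ^ k) = (\<Sum>k\<in>{1..Inf B}. if k = Inf B then q ^ Inf B / Inf B else 0)"
    using erdos_set_Inf(1)[OF assms] cInf_lower[of _ B]
    by (intro sum.cong) (auto simp: recip_on_def dest: le_antisym)
  then show ?thesis using erdos_set_Inf(2)[OF assms] by simp
qed

lemma abs_sum_mirsky_cyl_weighted_le:
  fixes g :: "nat \<Rightarrow> real"
  assumes "erdos_set B" "0 \<le> A" "0 \<le> q" "q < 1" "\<And>k. 1 \<le> k \<Longrightarrow> \<bar>g k\<bar> \<le> A * q ^ k"
  shows "\<bar>\<Sum>l\<in>{2..Inf B + 1}. measure (mirsky B) (cyl l) * g (l - 1)\<bar>
    \<le> A / (1 - q) * (recip_sum B ^ 2 + (1 / real (Inf B))\<^sup>2)"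
proof -
  define m where "m = Inf B"
  define S where "S = recip_sum B"
  have "\<bar>\<Sum>l\<in>{2..m + 1}. measure (mirsky B) (cyl l) * g (l - 1)\<bar>
      \<le> (\<Sum>k\<in>{1..m}. (S\<^sup>2 + recip_on B k) * (A * q ^ k))"
    unfolding m_def S_def using assms(1,5) by (rule abs_sum_mirsky_cyl_weighted_le_sum)
  also have "\<dots> = A * S\<^sup>2 * (\<Sum>k\<in>{1..m}. q ^ k) + A * (\<Sum>k\<in>{1..m}. recip_on B k * q ^ k)"
    by (simp add: sum.distrib sum_distrib_left algebra_simps)
  also have "(\<Sum>k\<in>{1..m}. recip_on B k * q ^ k) = (real m * q ^ m) * (1 / real m)\<^sup>2"
    unfolding m_def sum_recip_on_mult_power[OF assms(1)] by (simp add: power2_eq_square)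
  also have "A * S\<^sup>2 * (\<Sum>k\<in>{1..m}. q ^ k) + A * ((real m * q ^ m) * (1 / real m)\<^sup>2)
      \<le> A * S\<^sup>2 * (1 / (1 - q)) + A * (1 / (1 - q) * (1 / real m)\<^sup>2)"
  proof (intro add_mono mult_left_mono mult_right_mono)
    have "(\<Sum>k\<in>{1..m}. q ^ k) \<le> (\<Sum>k. q ^ k)"
      using assms(3,4) by (intro sum_le_suminf summable_geometric) auto
    then show "(\<Sum>k\<in>{1..m}. q ^ k) \<le> 1 / (1 - q)"
      using assms(3,4) by (simp add: suminf_geometric)
    show "real m * q ^ m \<le> 1 / (1 - q)"
      using assms(3,4) by (rule of_nat_mult_power_le)
  qed (use assms(2) in simp_all)
  also have "\<dots> = A / (1 - q) * (S\<^sup>2 + (1 / real m)\<^sup>2)"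
    by (simp add: distrib_left)
  finally show ?thesis by (simp add: S_def m_def)
qed

theorem theorem6p9:
  fixes \<phi> :: "bool \<Rightarrow> bool \<Rightarrow> real" and \<epsilon> :: real
  assumes "0 < \<epsilon>" and "\<epsilon> < 2"
  shows "\<exists>C>0. \<exists>\<delta>>0. \<forall>B. erdos_set B \<and> 1 - erdos_d B < \<delta> \<longrightarrow>
    \<bar>\<Sum>l\<in>{2..Inf B + 1}. measure (mirsky B) (cyl l) *
        log 2 (1 + snd (C00 \<phi>) / fst (C00 \<phi>) * (lam_minus \<phi> / lam_plus \<phi>) ^ (l - 1))\<bar>
      \<le> C * (1 - erdos_d B) powr \<epsilon>"
proof -
  define r where "r = lam_minus \<phi> / lam_plus \<phi>"
  define g where "g k = log 2 (1 + snd (C00 \<phi>) / fst (C00 \<phi>) * r ^ k)" for k :: nat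
  have "\<bar>r\<bar> < 1"
    using abs_lam_minus_less_lam_plus[of \<phi>] by (simp add: r_def abs_div)
  then obtain A where "0 \<le> A" and A: "\<And>k. 1 \<le> k \<Longrightarrow> \<bar>g k\<bar> \<le> A * \<bar>r\<bar> ^ k"
    unfolding g_def using abs_log_one_plus_geometric_le by blast
  define C where "C = 5 * A / (1 - \<bar>r\<bar>) + 1"
  have "0 < C" using \<open>0 \<le> A\<close> \<open>\<bar>r\<bar> < 1\<close> by (simp add: C_def add_nonneg_pos)
  have "\<bar>\<Sum>l\<in>{2..Inf B + 1}. measure (mirsky B) (cyl l) * g (l - 1)\<bar> \<le> C * (1 - erdos_d B) powr \<epsilon>"
    if B: "erdos_set B" "1 - erdos_d B < 1 / 2" for B
  proof -
    have "\<bar>\<Sum>l\<in>{2..Inf B + 1}. measure (mirsky B) (cyl l) * g (l - 1)\<bar>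
        \<le> A / (1 - \<bar>r\<bar>) * (recip_sum B ^ 2 + (1 / real (Inf B))\<^sup>2)"
      using B(1) \<open>0 \<le> A\<close> abs_ge_zero \<open>\<bar>r\<bar> < 1\<close> A by (rule abs_sum_mirsky_cyl_weighted_le)
    also have "\<dots> \<le> A / (1 - \<bar>r\<bar>) * (5 * (1 - erdos_d B)\<^sup>2)"
      using recip_sum_sq_plus_inverse_Inf_sq_le[OF B(1)] B(2) \<open>0 \<le> A\<close> \<open>\<bar>r\<bar> < 1\<close>
      by (intro mult_left_mono) simp_all
    also have "\<dots> = (C - 1) * (1 - erdos_d B)\<^sup>2"
      by (simp add: C_def)
    also have "\<dots> \<le> C * (1 - erdos_d B) powr \<epsilon>"
      using \<open>0 < C\<close> erdos_d_less_1[OF B(1)] erdos_d_nonneg[of B] assms(2)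
      by (intro order_trans[OF _ mult_left_mono[OF square_le_powr]]) (simp_all add: algebra_simps)
    finally show ?thesis .
  qed
  then show ?thesis
    using \<open>0 < C\<close> unfolding g_def r_def by (intro exI[of _ C] conjI exI[of _ "1 / 2"]) auto
qed

end
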